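(* Let $X$ be a $T_1$ space and $\mathcal{P}$ an ideal of closed subsets of $X$. Then every set $Z_\mathcal{P}(f)=\{x\in X\colon f(x)=0\}$ with $f\in C(X)_\mathcal{P}$ is closed in $X$ if and only if $C(X)_\mathcal{P}=C(X)$.
   Context: An ideal of closed subsets of $X$ is a family $\mathcal{P}$ of closed subsets closed under finite unions and under passing to closed subsets. $D_f$ is the set of discontinuity points of $f\in\mathbb{R}^X$; $C(X)_\mathcal{P}=\{f\in\mathbb{R}^X\colon\overline{D_f}\in\mathcal{P}\}$; $C(X)$ is the ring of continuous real-valued functions on $X$. *)

theory Defs
  imports "HOL-Analysis.Analysis"
begin

text \<open>The space X is the whole of a type 'a of class t1_space.\<close>

definition discont_points :: "('a::topological_space \<Rightarrow> real) \<Rightarrow> 'a set" where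
  "discont_points f = {x. \<not> (f \<longlongrightarrow> f x) (at x)}"

definition closed_ideal :: "'a::topological_space set set \<Rightarrow> bool" where
  "closed_ideal P \<longleftrightarrow>
     (\<forall>A\<in>P. closed A) \<and> {} \<in> P \<and>
     (\<forall>A\<in>P. \<forall>B\<in>P. A \<union> B \<in> P) \<and>
     (\<forall>A\<in>P. \<forall>B. closed B \<and> B \<subseteq> A \<longrightarrow> B \<in> P)"

definition C_P :: "'a::topological_space set set \<Rightarrow> ('a \<Rightarrow> real) set" where
  "C_P P = {f. closure (discont_points f) \<in> P}"

definition C_X :: "('a::topological_space \<Rightarrow> real) set" where
  "C_X = {f. continuous_on UNIV f}"

definition zero_set :: "('a \<Rightarrow> real) \<Rightarrow> 'a set" where
  "zero_set f = {x. f x = 0}"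

end

theory Submission
  imports Defs
begin

text \<open>If some f in C(X)_P had a discontinuity point x, then {x} would lie in P, so the
  indicator function of {x} would belong to C(X)_P. Its zero set X - {x} is closed, i.e. x is
  isolated; but a function cannot be discontinuous at an isolated point. Conversely, zero
  sets of continuous functions are always closed.\<close>

lemma continuous_on_UNIV_iff_discont_points_empty:
  "continuous_on UNIV f \<longleftrightarrow> discont_points f = {}"
  by (auto simp: discont_points_def continuous_on_def)

lemma discont_point_not_open_singleton:
  assumes "x \<in> discont_points f"
  shows "\<not> open {x}"
proof
  assume "open {x}"
  then have "at x = bot"
    by (simp add: at_eq_bot_iff)
  with assms show False
    by (simp add: discont_points_def)
qed

lemma discont_points_indicator_singleton:
  fixes x :: "'a::t1_space"
  shows "discont_points (indicator {x} :: 'a \<Rightarrow> real) \<subseteq> {x}"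
proof
  fix y assume y: "y \<in> discont_points (indicator {x} :: 'a \<Rightarrow> real)"
  show "y \<in> {x}"
  proof (rule ccontr)
    assume "y \<notin> {x}"
    then have "eventually (\<lambda>z. z \<in> - {x}) (at y)"
      by (intro eventually_at_in_open') auto
    then have "eventually (\<lambda>z. indicator {x} z = (indicator {x} y :: real)) (at y)"
      using \<open>y \<notin> {x}\<close> by (auto elim: eventually_mono)
    then have "(indicator {x} \<longlongrightarrow> (indicator {x} y :: real)) (at y)"
      by (rule tendsto_eventually)
    with y show False
      by (simp add: discont_points_def)
  qed
qed

lemma zero_set_indicator: "zero_set (indicator A :: 'a \<Rightarrow> real) = - A"
  by (auto simp: zero_set_def indicator_def)

lemma closed_zero_set_continuous:
  assumes "f \<in> C_X"
  shows "closed (zero_set f)"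
  using assms unfolding C_X_def zero_set_def
  by (auto intro: closed_Collect_eq continuous_on_const)

lemma closed_ideal_closed_subset:
  assumes "closed_ideal P" "A \<in> P" "closed B" "B \<subseteq> A"
  shows "B \<in> P"
  using assms unfolding closed_ideal_def by blast

lemma C_X_subset_C_P:
  assumes "closed_ideal P"
  shows "C_X \<subseteq> C_P P"
  using assms
  by (auto simp: C_X_def C_P_def continuous_on_UNIV_iff_discont_points_empty closed_ideal_def)

lemma closed_ideal_singleton_discont_point:
  fixes f :: "'a::t1_space \<Rightarrow> real"
  assumes "closed_ideal P" "f \<in> C_P P" "x \<in> discont_points f"
  shows "{x} \<in> P"
proof (rule closed_ideal_closed_subset[OF assms(1) _ closed_singleton])
  show "closure (discont_points f) \<in> P"
    using assms(2) by (simp add: C_P_def)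
  show "{x} \<subseteq> closure (discont_points f)"
    using assms(3) closure_subset by blast
qed

lemma indicator_singleton_in_C_P:
  fixes x :: "'a::t1_space"
  assumes "closed_ideal P" "{x} \<in> P"
  shows "(indicator {x} :: 'a \<Rightarrow> real) \<in> C_P P"
proof -
  have "closure (discont_points (indicator {x} :: 'a \<Rightarrow> real)) \<subseteq> {x}"
    by (rule closure_minimal[OF discont_points_indicator_singleton closed_singleton])
  then show ?thesis
    unfolding C_P_def using closed_ideal_closed_subset[OF assms] by blast
qed

theorem theorem2p6:
  fixes P :: "'a::t1_space set set"
  assumes "closed_ideal P"
  shows "(\<forall>f\<in>C_P P. closed (zero_set f)) \<longleftrightarrow> C_P P = (C_X :: ('a \<Rightarrow> real) set)"
proof
  assume closed_zero_sets: "\<forall>f\<in>C_P P. closed (zero_set f)"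
  have "f \<in> C_X" if "f \<in> C_P P" for f :: "'a \<Rightarrow> real"
  proof (rule ccontr)
    assume "f \<notin> C_X"
    then obtain x where x: "x \<in> discont_points f"
      by (auto simp: C_X_def continuous_on_UNIV_iff_discont_points_empty)
    have "{x} \<in> P"
      using closed_ideal_singleton_discont_point[OF assms \<open>f \<in> C_P P\<close> x] .
    then have "closed (zero_set (indicator {x} :: 'a \<Rightarrow> real))"
      using closed_zero_sets indicator_singleton_in_C_P[OF assms] by blast
    then have "open {x}"
      by (simp add: zero_set_indicator closed_def)
    with discont_point_not_open_singleton[OF x] show False ..
  qed
  with C_X_subset_C_P[OF assms] show "C_P P = C_X"
    by blast
next
  assume "C_P P = C_X"
  then show "\<forall>f\<in>C_P P. closed (zero_set f)"
    by (simp add: closed_zero_set_continuous)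
qed

end
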